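(* Let $\Gamma\subset\mathbb{C}^*$ be a subgroup with the accumulation property, i.e. either $\Gamma$ contains an element $q$ with $|q|\ne1$, or $\Gamma$ contains a sequence $\gamma_n\to1$ in $\mathbb{C}^*$ with $\gamma_n\neq1$. If $R\in\mathbb{C}(z)$ and a homomorphism $\sigma:\Gamma\to\Gamma$ satisfy $R(\gamma z)=\sigma(\gamma)R(z)$ for all $\gamma\in\Gamma$, $z\in\mathbb{C}^*$, then $R(z)=cz^n$ for some $c\in\mathbb{C}^*$ and $n\in\mathbb{Z}$. *)

theory Defs
  imports "HOL-Analysis.Analysis" "HOL-Computational_Algebra.Polynomial"
begin

definition subgroup_Cstar :: "complex set \<Rightarrow> bool" where
  "subgroup_Cstar G \<longleftrightarrow> 0 \<notin> G \<and> 1 \<in> G \<and> (\<forall>x\<in>G. \<forall>y\<in>G. x * y \<in> G) \<and> (\<forall>x\<in>G. inverse x \<in> G)"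

definition accumulation_property :: "complex set \<Rightarrow> bool" where
  "accumulation_property G \<longleftrightarrow>
     (\<exists>q\<in>G. norm q \<noteq> 1) \<or>
     (\<exists>g :: nat \<Rightarrow> complex. (\<forall>n. g n \<in> G \<and> g n \<noteq> 1) \<and> g \<longlonglongrightarrow> 1)"

definition endo_hom :: "complex set \<Rightarrow> (complex \<Rightarrow> complex) \<Rightarrow> bool" where
  "endo_hom G \<sigma> \<longleftrightarrow> (\<forall>x\<in>G. \<sigma> x \<in> G) \<and> (\<forall>x\<in>G. \<forall>y\<in>G. \<sigma> (x * y) = \<sigma> x * \<sigma> y)"

text \<open>Evaluation of the rational function p/q at z (meaningful where q z is nonzero).\<close>
definition rat_eval :: "complex poly \<Rightarrow> complex poly \<Rightarrow> complex \<Rightarrow> complex" where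
  "rat_eval p q z = poly p z / poly q z"

end

theory Submission
  imports Defs "HOL-Computational_Algebra.Fundamental_Theorem_Algebra"
begin

text \<open>Write \<open>R = p/q\<close>. The functional equation makes \<open>R(\<gamma>z)/R(z)\<close> a nonzero constant, so the
  order of \<open>R\<close> at \<open>a\<close> (zeros minus poles) equals its order at \<open>\<gamma>a\<close>. Hence the nonzero points where
  \<open>R\<close> has a zero or a pole form a finite set invariant under multiplication by \<open>\<Gamma>\<close>. The
  accumulation property makes every \<open>\<Gamma>\<close>-orbit in \<open>\<complex>\<^sup>*\<close> infinite (if some \<open>|\<gamma>| \<noteq> 1\<close>) or
  accumulating at its starting point (if \<open>\<gamma>\<^sub>n \<rightarrow> 1\<close>), so that set is empty and \<open>R\<close> has zeros and
  poles only at \<open>0\<close>.\<close>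

lemma pcompose_power: "pcompose (p ^ n) r = pcompose p r ^ n"
  for p r :: "'a::comm_semiring_1 poly"
  by (induct n) (simp_all add: pcompose_mult pcompose_pCons one_pCons)

lemma pcompose_dilation_eq_0_iff:
  fixes p :: "'a::field poly"
  assumes "g \<noteq> 0"
  shows "pcompose p [:0, g:] = 0 \<longleftrightarrow> p = 0"
  using assms pcompose_eq_0[of p "[:0, g:]"] by auto

lemma order_pcompose_dilation_ge:
  fixes p :: "'a::field poly"
  assumes "p \<noteq> 0" "g \<noteq> 0"
  shows "order (g * a) p \<le> order a (pcompose p [:0, g:])"
proof -
  define n where "n = order (g * a) p"
  obtain r where r: "p = [:-(g * a), 1:] ^ n * r"
    using order_1[of "g * a" p] unfolding n_def by (auto elim: dvdE)
  have "pcompose [:-(g * a), 1:] [:0, g:] = smult g [:-a, 1:]"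
    by (simp add: pcompose_pCons algebra_simps)
  then have "pcompose p [:0, g:] = [:-a, 1:] ^ n * smult (g ^ n) (pcompose r [:0, g:])"
    by (subst r) (simp only: pcompose_mult pcompose_power smult_power mult_smult_left mult_smult_right)
  then have "[:-a, 1:] ^ n dvd pcompose p [:0, g:]"
    by (metis dvd_triv_left)
  then show ?thesis
    using order_divides pcompose_dilation_eq_0_iff assms n_def by blast
qed

lemma order_pcompose_dilation:
  fixes p :: "'a::field poly"
  assumes "p \<noteq> 0" "g \<noteq> 0"
  shows "order a (pcompose p [:0, g:]) = order (g * a) p"
proof (rule antisym)
  have "pcompose (pcompose p [:0, g:]) [:0, inverse g:] = p"
    using assms by (simp add: pcompose_assoc[symmetric] pcompose_pCons)
  moreover have "order (inverse g * (g * a)) (pcompose p [:0, g:])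
      \<le> order (g * a) (pcompose (pcompose p [:0, g:]) [:0, inverse g:])"
    using assms by (intro order_pcompose_dilation_ge) (simp_all add: pcompose_dilation_eq_0_iff)
  ultimately show "order a (pcompose p [:0, g:]) \<le> order (g * a) p"
    using assms by (simp add: field_simps)
qed (rule order_pcompose_dilation_ge[OF assms])

lemma dilation_identity_if_functional_eq:
  fixes p q :: "'a::field_char_0 poly"
  assumes "q \<noteq> 0" "g \<noteq> 0"
    and eq: "\<And>z. z \<noteq> 0 \<Longrightarrow> poly q z \<noteq> 0 \<Longrightarrow> poly q (g * z) \<noteq> 0 \<Longrightarrow>
               poly p (g * z) / poly q (g * z) = s * (poly p z / poly q z)"
  shows "pcompose p [:0, g:] * q = smult s (p * pcompose q [:0, g:])"
proof -
  define D where "D = pcompose p [:0, g:] * q - smult s (p * pcompose q [:0, g:])"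
  define B where "B = {0} \<union> {z. poly q z = 0} \<union> {z. poly (pcompose q [:0, g:]) z = 0}"
  have B: "finite B"
    unfolding B_def using assms(1,2)
    by (simp add: poly_roots_finite pcompose_dilation_eq_0_iff)
  have "- B \<subseteq> {z. poly D z = 0}"
  proof
    fix z assume "z \<in> - B"
    then have z: "z \<noteq> 0" "poly q z \<noteq> 0" "poly q (g * z) \<noteq> 0"
      unfolding B_def by (auto simp: poly_pcompose mult.commute)
    then have "poly p (g * z) * poly q z = s * (poly p z * poly q (g * z))"
      using eq[OF z] by (simp add: field_simps)
    then show "z \<in> {z. poly D z = 0}"
      unfolding D_def by (simp add: poly_pcompose mult.commute)
  qed
  then have "UNIV \<subseteq> B \<union> {z. poly D z = 0}"
    by blast
  then have "D = 0"
    using B poly_roots_finite[of D] infinite_UNIV_char_0 finite_subset by auto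
  then show ?thesis
    unfolding D_def by simp
qed

lemma order_balance_if_dilation_identity:
  fixes p q :: "'a::field poly"
  assumes "p \<noteq> 0" "q \<noteq> 0" "g \<noteq> 0" "s \<noteq> 0"
    and "pcompose p [:0, g:] * q = smult s (p * pcompose q [:0, g:])"
  shows "order (g * a) p + order a q = order a p + order (g * a) q"
proof -
  have nonzero: "pcompose p [:0, g:] \<noteq> 0" "pcompose q [:0, g:] \<noteq> 0"
    using assms(1-3) pcompose_dilation_eq_0_iff by blast+
  have "order (g * a) p + order a q = order a (pcompose p [:0, g:] * q)"
    using nonzero assms(2) by (simp add: order_mult order_pcompose_dilation[OF assms(1,3)])
  also have "\<dots> = order a (smult s (p * pcompose q [:0, g:]))"
    using assms(5) by (rule arg_cong)
  also have "\<dots> = order a p + order (g * a) q"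
    using nonzero assms(1,4) by (simp add: order_smult order_mult order_pcompose_dilation[OF assms(2,3)])
  finally show ?thesis .
qed

lemma finite_order_mismatch:
  fixes p q :: "'a::idom poly"
  assumes "p \<noteq> 0" "q \<noteq> 0"
  shows "finite {a. order a p \<noteq> order a q}"
proof -
  have "{a. order a p \<noteq> order a q} \<subseteq> {a. poly p a = 0} \<union> {a. poly q a = 0}"
    using assms by (auto simp: order_root)
  then show ?thesis
    using assms poly_roots_finite finite_subset by blast
qed

lemma complex_poly_eq_smult_if_order_eq:
  fixes p q :: "complex poly"
  assumes "p \<noteq> 0" "q \<noteq> 0" "\<And>a. order a p = order a q"
  shows "p = smult (lead_coeff p / lead_coeff q) q"
proof -
  have "{z. poly p z = 0} = {z. poly q z = 0}"
    using assms by (simp add: order_root)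
  define P where "P = (\<Prod>z|poly q z = 0. [:-z, 1:] ^ order z q)"
  have "p = smult (lead_coeff p) P"
    using complex_poly_decompose[of p] \<open>{z. poly p z = 0} = _\<close> assms(3) by (simp add: P_def)
  also have "\<dots> = smult (lead_coeff p / lead_coeff q) (smult (lead_coeff q) P)"
    using assms(2) by simp
  also have "smult (lead_coeff q) P = q"
    unfolding P_def by (rule complex_poly_decompose)
  finally show ?thesis .
qed

lemma rat_eval_eq_monomial_if_order_eq:
  fixes p q :: "complex poly"
  assumes "p \<noteq> 0" "q \<noteq> 0" "\<And>a. a \<noteq> 0 \<Longrightarrow> order a p = order a q"
  shows "\<exists>c n. c \<noteq> 0 \<and> (\<forall>z. z \<noteq> 0 \<and> poly q z \<noteq> 0 \<longrightarrow> rat_eval p q z = c * z powi n)"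
proof -
  define k l where "k = order 0 p" and "l = order 0 q"
  define P Q where "P = p * monom 1 l" and "Q = q * monom 1 k"
  define c where "c = lead_coeff P / lead_coeff Q"
  have "P \<noteq> 0" "Q \<noteq> 0"
    unfolding P_def Q_def using assms by auto
  then have "c \<noteq> 0"
    by (simp add: c_def)
  have "order a P = order a Q" for a
    using assms order_0I[of "monom 1 _" a]
    by (cases "a = 0") (auto simp: P_def Q_def order_mult k_def l_def poly_monom)
  then have PQ: "P = smult c Q"
    unfolding c_def using \<open>P \<noteq> 0\<close> \<open>Q \<noteq> 0\<close> by (rule complex_poly_eq_smult_if_order_eq[rotated 2])
  have "rat_eval p q z = c * z powi (int k - int l)" if "z \<noteq> 0" "poly q z \<noteq> 0" for z
  proof -
    have "poly p z * z ^ l = c * (poly q z * z ^ k)"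
      using arg_cong[OF PQ, of "\<lambda>r. poly r z"] by (simp add: P_def Q_def poly_monom)
    then show ?thesis
      using that by (simp add: rat_eval_def power_int_diff field_simps)
  qed
  with \<open>c \<noteq> 0\<close> show ?thesis
    by (intro exI[of _ c] exI[of _ "int k - int l"]) auto
qed

lemma subgroup_Cstar_power:
  assumes "subgroup_Cstar G" "r \<in> G"
  shows "r ^ k \<in> G"
proof (induct k)
  case 0
  show ?case
    using assms(1) unfolding subgroup_Cstar_def by simp
next
  case (Suc k)
  then show ?case
    using assms unfolding subgroup_Cstar_def by simp
qed

lemma subgroup_Cstar_ex_norm_gt_1:
  assumes "subgroup_Cstar G" "q \<in> G" "norm q \<noteq> 1"
  shows "\<exists>r\<in>G. 1 < norm r"
proof (cases "1 < norm q")
  case False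
  have "q \<noteq> 0"
    using assms(1,2) unfolding subgroup_Cstar_def by blast
  with False assms(3) have "1 < norm (inverse q)"
    by (simp add: norm_inverse one_less_inverse)
  moreover have "inverse q \<in> G"
    using assms(1,2) unfolding subgroup_Cstar_def by blast
  ultimately show ?thesis
    by blast
qed (use assms in blast)

lemma inj_scaled_powers:
  fixes r a :: "'a::real_normed_field"
  assumes "1 < norm r" "a \<noteq> 0"
  shows "inj (\<lambda>k. r ^ k * a)"
proof (rule injI)
  fix i j assume "r ^ i * a = r ^ j * a"
  then have "norm r ^ i = norm r ^ j"
    using assms(2) by (metis mult_cancel_right norm_power)
  then show "i = j"
    using assms(1) by simp
qed

lemma finite_invariant_set_empty:
  assumes G: "subgroup_Cstar G" "accumulation_property G"
    and S: "finite S" "0 \<notin> S"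
    and invariant: "\<And>g a. g \<in> G \<Longrightarrow> a \<in> S \<Longrightarrow> g * a \<in> S"
  shows "S = {}"
proof (rule ccontr)
  assume "S \<noteq> {}"
  then obtain a where "a \<in> S" and "a \<noteq> 0"
    using S(2) by blast
  consider (norm) q where "q \<in> G" "norm q \<noteq> 1"
    | (seq) g where "\<And>n. g n \<in> G" "\<And>n. g n \<noteq> 1" "g \<longlonglongrightarrow> 1"
    using G(2) unfolding accumulation_property_def by blast
  then show False
  proof cases
    case norm
    then obtain r where "r \<in> G" "1 < norm r"
      using G(1) subgroup_Cstar_ex_norm_gt_1 by blast
    then have "range (\<lambda>k. r ^ k * a) \<subseteq> S"
      using G(1) \<open>a \<in> S\<close> by (auto intro: invariant subgroup_Cstar_power)
    moreover have "infinite (range (\<lambda>k. r ^ k * a))"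
      using finite_imageD[OF _ inj_scaled_powers[OF \<open>1 < norm r\<close> \<open>a \<noteq> 0\<close>]] by auto
    ultimately show False
      using S(1) finite_subset by blast
  next
    case seq
    then have "\<forall>n. g n * a \<in> S - {a}"
      using \<open>a \<in> S\<close> \<open>a \<noteq> 0\<close> invariant by simp
    moreover have "(\<lambda>n. g n * a) \<longlonglongrightarrow> a"
      using tendsto_mult_right[OF seq(3), of a] by simp
    ultimately have "a islimpt S"
      unfolding islimpt_sequential by (intro exI[of _ "\<lambda>n. g n * a"]) simp
    then show False
      using S(1) islimpt_finite by blast
  qed
qed

theorem mainTheorem8:
  fixes G :: "complex set" and \<sigma> :: "complex \<Rightarrow> complex" and p q :: "complex poly"
  assumes "subgroup_Cstar G"
    and "accumulation_property G"
    and "endo_hom G \<sigma>"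
    and "q \<noteq> 0" and "p \<noteq> 0"
    and "\<forall>\<gamma>\<in>G. \<forall>z. z \<noteq> 0 \<and> poly q z \<noteq> 0 \<and> poly q (\<gamma> * z) \<noteq> 0 \<longrightarrow>
            rat_eval p q (\<gamma> * z) = \<sigma> \<gamma> * rat_eval p q z"
  shows "\<exists>c::complex. \<exists>n::int. c \<noteq> 0 \<and>
           (\<forall>z. z \<noteq> 0 \<and> poly q z \<noteq> 0 \<longrightarrow> rat_eval p q z = c * z powi n)"
proof -
  have nonzero: "\<gamma> \<noteq> 0" "\<sigma> \<gamma> \<noteq> 0" if "\<gamma> \<in> G" for \<gamma>
  proof -
    have "0 \<notin> G" "\<sigma> \<gamma> \<in> G"
      using assms(1,3) that unfolding subgroup_Cstar_def endo_hom_def by blast+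
    then show "\<gamma> \<noteq> 0" "\<sigma> \<gamma> \<noteq> 0"
      using that by auto
  qed
  have balance: "order (\<gamma> * a) p + order a q = order a p + order (\<gamma> * a) q" if "\<gamma> \<in> G" for \<gamma> a
  proof (rule order_balance_if_dilation_identity)
    show "pcompose p [:0, \<gamma>:] * q = smult (\<sigma> \<gamma>) (p * pcompose q [:0, \<gamma>:])"
      using assms(4,6) nonzero that
      by (intro dilation_identity_if_functional_eq) (auto simp: rat_eval_def)
  qed (use assms(4,5) nonzero that in auto)
  define S where "S = {a. a \<noteq> 0 \<and> order a p \<noteq> order a q}"
  have "finite S"
    using finite_order_mismatch[OF assms(5,4)] unfolding S_def by (rule rev_finite_subset) blast
  moreover have "\<gamma> * a \<in> S" if "\<gamma> \<in> G" "a \<in> S" for \<gamma> a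
    using that nonzero balance[of \<gamma> a] unfolding S_def by auto
  ultimately have "S = {}"
    using assms(1,2) by (intro finite_invariant_set_empty) (auto simp: S_def)
  then show ?thesis
    using assms(4,5) by (intro rat_eval_eq_monomial_if_order_eq) (auto simp: S_def)
qed

end
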